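(* Let $t,t'\in B_n$ with $t\neq t'$, let $G$ be a digraph such that $\mathbb{A}(G)$ satisfies $t\approx t'$, and write $L=L_{t,t'}$, $\lambda=\lambda_{t,t'}$. Assume that $E_G=L+1$, that $u_0\to u_1\to\dots\to u_L\to u_{L+1}$ is an entryway to a nontrivial strongly connected component $K$, that $w$ is a vertex of $K$ with $(w,u_{L+1})\in E(G)$, and that $v_0\to v_1\to\dots\to v_\lambda$ is a walk in $G$. Then $(w,v_0)$ is an edge if and only if $(u_L,v_0)$ is an edge. Consequently, $\lambda_G<\lambda_{t,t'}$.
   Context: Digraphs $G=(V,E)$ have $E\subseteq V\times V$, loops allowed, possibly infinite. $\mathbb{A}(G)$ is the groupoid on $V\cup\{\infty\}$ with $xy=x$ if $x,y\in V$, $(x,y)\in E$, and $xy=\infty$ otherwise. $B_n$: binary terms with $x_1,\dots,x_n$ each occurring once in this order; $G(t)$: rooted tree defined by $G(x_i)$ a single vertex and $G(t_1t_2)=G(t_1)\cup G(t_2)$ plus an edge from the leftmost variable of $t_1$ to that of $t_2$; root $x_1$. $d_T$ is depth, $h$ height, $T_x$ the rooted induced subtree of $x$ and its descendants. With $T=G(t)$, $T'=G(t')$: $L_{t,t'}$ is the largest $m$ such that for all $x$, $d_T(x)\le m$ or $d_{T'}(x)\le m$ implies $d_T(x)=d_{T'}(x)$; $\Lambda=\{x:d_T(x)\ne d_{T'}(x),\ L_{t,t'}+1\in\{d_T(x),d_{T'}(x)\}\}$ and $\lambda_{t,t'}=\min\{\max(h(T_x),h(T'_x)):x\in\Lambda\}$.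 A strongly connected component (SCC) is trivial if it is a single vertex without a loop, nontrivial otherwise. A path $v_0\to\dots\to v_\ell$ is an entryway to a nontrivial SCC $K$ if $v_0,\dots,v_{\ell-1}$ lie in trivial SCCs and $v_\ell\in K$; $E_G$ is the maximal length of an entryway ($\infty$ if unbounded, $-\infty$ if none). $\lambda_G$ is the largest integer $m$ such that there exist an entryway $u_0\to\dots\to u_{E_G}$ to a nontrivial SCC $K$, a vertex $w\in K$ with $(w,u_{E_G})\in E$, and a walk $v_0\to\dots\to v_m$ such that exactly one of $(w,v_0)$, $(u_{E_G-1},v_0)$ is an edge ($\infty$ if unbounded, $-\infty$ if no such $m$). *)

theory Defs
  imports Main "HOL-Library.Extended_Real"
begin

datatype bterm = Var nat | App bterm bterm

fun leaves :: "bterm \<Rightarrow> nat list" where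
  "leaves (Var i) = [i]"
| "leaves (App a b) = leaves a @ leaves b"

definition B :: "nat \<Rightarrow> bterm set" where
  "B n = {t. leaves t = [1..<Suc n]}"

section \<open>The groupoid A(G); the point infinity is None\<close>

fun gmult :: "('a \<times> 'a) set \<Rightarrow> 'a option \<Rightarrow> 'a option \<Rightarrow> 'a option" where
  "gmult E (Some x) (Some y) = (if (x, y) \<in> E then Some x else None)"
| "gmult E _ _ = None"

definition gcarrier :: "'a set \<Rightarrow> 'a option set" where
  "gcarrier V = Some ` V \<union> {None}"

fun geval :: "('a \<times> 'a) set \<Rightarrow> (nat \<Rightarrow> 'a option) \<Rightarrow> bterm \<Rightarrow> 'a option" where
  "geval E a (Var i) = a i"
| "geval E a (App s u) = gmult E (geval E a s) (geval E a u)"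

definition satisfies :: "'a set \<Rightarrow> ('a \<times> 'a) set \<Rightarrow> bterm \<Rightarrow> bterm \<Rightarrow> bool" where
  "satisfies V E t t' \<longleftrightarrow>
     (\<forall>a. (\<forall>i. a i \<in> gcarrier V) \<longrightarrow> geval E a t = geval E a t')"

fun lm :: "bterm \<Rightarrow> nat" where
  "lm (Var i) = i"
| "lm (App a b) = lm a"

fun tedges :: "bterm \<Rightarrow> (nat \<times> nat) set" where
  "tedges (Var i) = {}"
| "tedges (App a b) = tedges a \<union> tedges b \<union> {(lm a, lm b)}"

definition depth :: "bterm \<Rightarrow> nat \<Rightarrow> nat" where
  "depth t x = (LEAST k. (lm t, x) \<in> tedges t ^^ k)"

definition subheight :: "bterm \<Rightarrow> nat \<Rightarrow> nat" where
  "subheight t x = Max {k. \<exists>y. (x, y) \<in> tedges t ^^ k}"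

definition Lt :: "bterm \<Rightarrow> bterm \<Rightarrow> nat" where
  "Lt t t' = (GREATEST m. \<forall>x\<in>set (leaves t).
       (depth t x \<le> m \<or> depth t' x \<le> m) \<longrightarrow> depth t x = depth t' x)"

definition Lambda_set :: "bterm \<Rightarrow> bterm \<Rightarrow> nat set" where
  "Lambda_set t t' = {x \<in> set (leaves t). depth t x \<noteq> depth t' x \<and>
       Lt t t' + 1 \<in> {depth t x, depth t' x}}"

definition lambdat :: "bterm \<Rightarrow> bterm \<Rightarrow> nat" where
  "lambdat t t' = Min ((\<lambda>x. max (subheight t x) (subheight t' x)) ` Lambda_set t t')"

definition walk :: "'a set \<Rightarrow> ('a \<times> 'a) set \<Rightarrow> (nat \<Rightarrow> 'a) \<Rightarrow> nat \<Rightarrow> bool" where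
  "walk V E v l \<longleftrightarrow> v 0 \<in> V \<and> (\<forall>i<l. (v i, v (Suc i)) \<in> E)"

definition scc :: "'a set \<Rightarrow> ('a \<times> 'a) set \<Rightarrow> 'a \<Rightarrow> 'a set" where
  "scc V E x = {y \<in> V. (x, y) \<in> E\<^sup>* \<and> (y, x) \<in> E\<^sup>*}"

definition is_scc :: "'a set \<Rightarrow> ('a \<times> 'a) set \<Rightarrow> 'a set \<Rightarrow> bool" where
  "is_scc V E K \<longleftrightarrow> (\<exists>x\<in>V. K = scc V E x)"

definition trivial_scc :: "'a set \<Rightarrow> ('a \<times> 'a) set \<Rightarrow> 'a set \<Rightarrow> bool" where
  "trivial_scc V E K \<longleftrightarrow> (\<exists>x. K = {x} \<and> (x, x) \<notin> E)"

definition nontrivial_scc :: "'a set \<Rightarrow> ('a \<times> 'a) set \<Rightarrow> 'a set \<Rightarrow> bool" where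
  "nontrivial_scc V E K \<longleftrightarrow> is_scc V E K \<and> \<not> trivial_scc V E K"

definition entryway :: "'a set \<Rightarrow> ('a \<times> 'a) set \<Rightarrow> (nat \<Rightarrow> 'a) \<Rightarrow> nat \<Rightarrow> 'a set \<Rightarrow> bool" where
  "entryway V E v l K \<longleftrightarrow> walk V E v l \<and> nontrivial_scc V E K \<and>
     (\<forall>i<l. trivial_scc V E (scc V E (v i))) \<and> v l \<in> K"

text \<open>E_G as an extended real: Sup of the empty set is -\<infinity>, unbounded gives \<infinity>.\<close>
definition EG :: "'a set \<Rightarrow> ('a \<times> 'a) set \<Rightarrow> ereal" where
  "EG V E = Sup {ereal (real l) | l. \<exists>v K. entryway V E v l K}"

definition lambdaG :: "'a set \<Rightarrow> ('a \<times> 'a) set \<Rightarrow> ereal" where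
  "lambdaG V E = Sup {ereal (real m) | m. \<exists>u l K w v.
      ereal (real l) = EG V E \<and> 1 \<le> l \<and> entryway V E u l K \<and> w \<in> K \<and>
      (w, u l) \<in> E \<and> walk V E v m \<and>
      (((w, v 0) \<in> E) \<noteq> ((u (l - 1), v 0) \<in> E))}"

end

theory Submission
  imports Defs
begin

(* A homomorphism of the tree G(t) into G is exactly an assignment on which t evaluates to a
   vertex of A(G), so A(G) |= t = t' says that G(t) and G(t') have the same homomorphisms into G.
   Let L = L_{t,t'} and pick x in Lambda realising lambda_{t,t'}, say at depth L+1 in G(t) but
   not in G(t'). Going round K, the entryway and w give two infinite walks that pass u_L resp. w
   at position L and coincide from position L+1 on. Mapping every vertex of G(t) along the first
   walk according to its depth, and the subtree of x along v, is a homomorphism of G(t) because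
   (u_L, v_0) is an edge, hence also one of G(t'). The top L levels of both trees coincide, so in
   G(t') they can be re-routed along the second walk; the only edges to be checked lead from
   level L to level L+1 of G(t'), and they are handled by the same argument with t and t'
   exchanged, by induction along the leaf order. Read back in G(t) at the edge into x, the
   re-routed homomorphism gives the edge (w, v_0). *)

section \<open>The rooted trees G(t)\<close>

lemma leaves_not_Nil: "leaves t \<noteq> []"
  by (induction t) auto

lemma lm_eq_hd_leaves: "lm t = hd (leaves t)"
  by (induction t) (auto simp: leaves_not_Nil)

lemma lm_in_leaves: "lm t \<in> set (leaves t)"
  by (induction t) auto

lemma tedges_in_leaves: "(p, i) \<in> tedges t \<Longrightarrow> p \<in> set (leaves t) \<and> i \<in> set (leaves t)"
  by (induction t) (auto simp: lm_in_leaves)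

lemma tedges_increasing: "sorted_wrt (<) (leaves t) \<Longrightarrow> (p, i) \<in> tedges t \<Longrightarrow> p < i"
  by (induction t) (auto simp: sorted_wrt_append lm_in_leaves)

lemma lm_no_parent: "distinct (leaves t) \<Longrightarrow> (p, lm t) \<notin> tedges t"
proof (induction t)
  case (App a b)
  then show ?case
    using lm_in_leaves[of a] lm_in_leaves[of b] by (auto dest: tedges_in_leaves)
qed simp

lemma tedges_unique_parent:
  "distinct (leaves t) \<Longrightarrow> (p, i) \<in> tedges t \<Longrightarrow> (q, i) \<in> tedges t \<Longrightarrow> p = q"
proof (induction t)
  case (App a b)
  then show ?case
    using lm_no_parent[of b] lm_in_leaves[of b]
    by (auto dest: tedges_in_leaves)
qed simp

lemma lm_reaches_leaves: "i \<in> set (leaves t) \<Longrightarrow> (lm t, i) \<in> (tedges t)\<^sup>*"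
proof (induction t)
  case (App a b)
  have "(tedges a)\<^sup>* \<subseteq> (tedges (App a b))\<^sup>*" "(tedges b)\<^sup>* \<subseteq> (tedges (App a b))\<^sup>*"
    by (intro rtrancl_mono; auto)+
  moreover have "(lm a, lm b) \<in> tedges (App a b)"
    by simp
  ultimately show ?case
    using App by (auto intro: converse_rtrancl_into_rtrancl)
qed simp

lemma relpow_from_root_length_unique:
  assumes "\<And>p q i. (p, i) \<in> R \<Longrightarrow> (q, i) \<in> R \<Longrightarrow> p = q" and "\<And>p. (p, r) \<notin> R"
    and "(r, i) \<in> R ^^ k" and "(r, i) \<in> R ^^ m"
  shows "k = m"
proof -
  (* by left-uniqueness, a strictly longer path would have to pass through the root again *)
  have no_longer_path: False
    if short: "(r, i) \<in> R ^^ l" and long: "(r, i) \<in> R ^^ (Suc j + l)" for i j l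
  proof -
    obtain y where ry: "(r, y) \<in> R ^^ Suc j" and yi: "(y, i) \<in> R ^^ l"
      using long unfolding relpow_add by blast
    have "y = r"
      using relpow_left_unique[OF assms(1) yi short] .
    with ry have "(r, r) \<in> R ^^ Suc j"
      by simp
    then show False
      using assms(2) by (auto elim: relpow_Suc_E)
  qed
  show ?thesis
  proof (cases k m rule: linorder_cases)
    case less
    then obtain j where "m = Suc j + k"
      by (auto simp: less_iff_Suc_add)
    then show ?thesis
      using no_longer_path assms(3,4) by blast
  next
    case greater
    then obtain j where "k = Suc j + m"
      by (auto simp: less_iff_Suc_add)
    then show ?thesis
      using no_longer_path assms(3,4) by blast
  qed
qed

lemma depth_eqI:
  assumes "distinct (leaves t)" and "(lm t, i) \<in> tedges t ^^ k"
  shows "depth t i = k"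
  unfolding depth_def
proof (rule Least_equality)
  show "k \<le> m" if "(lm t, i) \<in> tedges t ^^ m" for m
    using relpow_from_root_length_unique[OF tedges_unique_parent[OF assms(1)]
        lm_no_parent[OF assms(1)] assms(2) that] by simp
qed (fact assms(2))

lemma lm_relpow_depth:
  "distinct (leaves t) \<Longrightarrow> i \<in> set (leaves t) \<Longrightarrow> (lm t, i) \<in> tedges t ^^ depth t i"
  using lm_reaches_leaves depth_eqI by (metis rtrancl_power)

lemma depth_tedges: "distinct (leaves t) \<Longrightarrow> (p, i) \<in> tedges t \<Longrightarrow> depth t i = Suc (depth t p)"
  by (meson depth_eqI lm_relpow_depth relpow_Suc_I tedges_in_leaves)

lemma depth_relpow:
  "distinct (leaves t) \<Longrightarrow> x \<in> set (leaves t) \<Longrightarrow> (x, i) \<in> tedges t ^^ k \<Longrightarrow>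
    depth t i = depth t x + k"
  by (meson depth_eqI lm_relpow_depth relpow_trans)

lemma depth_le_descendant:
  "distinct (leaves t) \<Longrightarrow> x \<in> set (leaves t) \<Longrightarrow> (x, i) \<in> (tedges t)\<^sup>* \<Longrightarrow>
    depth t x \<le> depth t i"
  by (metis depth_relpow le_add1 rtrancl_power)

lemma depth_less_descendant:
  assumes "distinct (leaves t)" and "x \<in> set (leaves t)" and "(x, i) \<in> (tedges t)\<^sup>*"
    and "i \<noteq> x"
  shows "depth t x < depth t i"
proof -
  obtain k where "(x, i) \<in> tedges t ^^ k" and "k \<noteq> 0"
    using assms(3,4) by (metis relpow_0_E rtrancl_power)
  then show ?thesis
    using depth_relpow[OF assms(1,2)] by fastforce
qed

lemma depth_lm [simp]: "depth t (lm t) = 0"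
  unfolding depth_def by simp

lemma depth_eq_0_imp_lm:
  "distinct (leaves t) \<Longrightarrow> i \<in> set (leaves t) \<Longrightarrow> depth t i = 0 \<Longrightarrow> i = lm t"
  using lm_relpow_depth by fastforce

lemma parent_exists:
  "distinct (leaves t) \<Longrightarrow> i \<in> set (leaves t) \<Longrightarrow> depth t i = Suc d \<Longrightarrow>
    \<exists>p. (p, i) \<in> tedges t \<and> depth t p = d"
  by (metis lm_relpow_depth relpow_Suc_E depth_eqI)

lemma depth_App_left:
  assumes "distinct (leaves (App a b))" and "i \<in> set (leaves a)"
  shows "depth (App a b) i = depth a i"
proof -
  have "(lm a, i) \<in> tedges a ^^ depth a i"
    using assms by (simp add: lm_relpow_depth)
  then have "(lm a, i) \<in> tedges (App a b) ^^ depth a i"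
    by (rule relpowp_mono[to_set, rotated]) auto
  then show ?thesis
    using depth_eqI[OF assms(1)] by simp
qed

lemma depth_App_right:
  assumes "distinct (leaves (App a b))" and "i \<in> set (leaves b)"
  shows "depth (App a b) i = Suc (depth b i)"
proof -
  have "(lm b, i) \<in> tedges b ^^ depth b i"
    using assms by (simp add: lm_relpow_depth)
  then have "(lm b, i) \<in> tedges (App a b) ^^ depth b i"
    by (rule relpowp_mono[to_set, rotated]) auto
  then have "(lm a, i) \<in> tedges (App a b) ^^ Suc (depth b i)"
    by (rule relpow_Suc_I2[rotated]) simp
  then show ?thesis
    using depth_eqI[OF assms(1)] by simp
qed

lemma leaves_eq_single_iff: "leaves t = [x] \<longleftrightarrow> t = Var x"
  by (cases t) (auto simp: append_eq_Cons_conv leaves_not_Nil)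

lemma length_leaves_left_le:
  assumes dist: "distinct (leaves a @ leaves b)"
    and split: "leaves a @ leaves b = leaves a' @ leaves b'"
    and depths: "\<forall>i\<in>set (leaves b'). depth (App a b) i = depth (App a' b') i"
  shows "length (leaves a') \<le> length (leaves a)"
proof (rule ccontr)
  assume "\<not> ?thesis"
  then obtain us where a': "leaves a' = leaves a @ us" and b: "leaves b = us @ leaves b'"
    and "us \<noteq> []"
    using split by (fastforce simp: append_eq_append_conv2)
  have "distinct (leaves (App a' b'))"
    using dist split by simp
  then have "depth (App a' b') (lm b') = 1"
    using depth_App_right lm_in_leaves by simp
  then have "depth (App a b) (lm b') = 1"
    using depths lm_in_leaves by metis
  moreover have lm_b': "lm b' \<in> set (leaves b)"
    using b lm_in_leaves by simp
  ultimately have "depth b (lm b') = 0"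
    using depth_App_right dist by simp
  then have "lm b' = lm b"
    using depth_eq_0_imp_lm lm_b' dist by simp
  also have "lm b = hd us"
    using b \<open>us \<noteq> []\<close> by (simp add: lm_eq_hd_leaves)
  finally have "lm b' \<in> set us"
    using \<open>us \<noteq> []\<close> by simp
  then show False
    using dist b lm_in_leaves[of b'] by auto
qed

lemma bterm_eq_if_depth_eq:
  "distinct (leaves t) \<Longrightarrow> leaves t' = leaves t \<Longrightarrow> \<forall>i\<in>set (leaves t). depth t i = depth t' i \<Longrightarrow>
    t = t'"
proof (induction t arbitrary: t')
  case (Var x)
  then show ?case
    by (simp add: leaves_eq_single_iff)
next
  case (App a b)
  then obtain a' b' where t': "t' = App a' b'"
    by (cases t') (auto simp: Cons_eq_append_conv leaves_not_Nil)
  have dist: "distinct (leaves (App a b))" "distinct (leaves (App a' b'))"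
    using App.prems(1,2) t' by simp_all
  have same_leaves: "leaves a' @ leaves b' = leaves a @ leaves b"
    using App.prems(2) t' by simp
  have "\<forall>i\<in>set (leaves b'). depth (App a b) i = depth (App a' b') i"
    using App.prems(3) t' same_leaves by (metis Un_iff set_append leaves.simps(2))
  then have "length (leaves a') \<le> length (leaves a)"
    using length_leaves_left_le dist same_leaves by (metis leaves.simps(2))
  moreover have "\<forall>i\<in>set (leaves b). depth (App a' b') i = depth (App a b) i"
    using App.prems(3) t' by simp
  then have "length (leaves a) \<le> length (leaves a')"
    using length_leaves_left_le dist same_leaves by (metis leaves.simps(2))
  ultimately have a': "leaves a' = leaves a" and b': "leaves b' = leaves b"
    using App.prems(2) t' by (auto simp: append_eq_append_conv)
  have "a = a'"
  proof (rule App.IH(1))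
    show "\<forall>i\<in>set (leaves a). depth a i = depth a' i"
      using App.prems(3) t' a' depth_App_left[OF dist(1)] depth_App_left[OF dist(2)] by auto
  qed (use dist a' in simp_all)
  moreover have "b = b'"
  proof (rule App.IH(2))
    show "\<forall>i\<in>set (leaves b). depth b i = depth b' i"
      using App.prems(3) t' b' depth_App_right[OF dist(1)] depth_App_right[OF dist(2)] by auto
  qed (use dist b' in simp_all)
  ultimately show ?case
    using t' by simp
qed

lemma rtrancl_tedges_in_leaves:
  "(x, y) \<in> (tedges t)\<^sup>* \<Longrightarrow> x \<in> set (leaves t) \<Longrightarrow> y \<in> set (leaves t)"
  by (induction rule: rtrancl_induct) (auto dest: tedges_in_leaves)

lemma subheight_ge:
  assumes dist: "distinct (leaves t)" and x: "x \<in> set (leaves t)"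
    and path: "(x, y) \<in> tedges t ^^ k"
  shows "k \<le> subheight t x"
proof -
  have "{k. \<exists>y. (x, y) \<in> tedges t ^^ k} \<subseteq> {..Max (depth t ` set (leaves t))}"
  proof clarify
    fix k y assume xy: "(x, y) \<in> tedges t ^^ k"
    then have "y \<in> set (leaves t)"
      using rtrancl_tedges_in_leaves x relpow_imp_rtrancl by blast
    then have "depth t y \<le> Max (depth t ` set (leaves t))"
      by simp
    moreover have "depth t y = depth t x + k"
      using depth_relpow[OF dist x xy] .
    ultimately show "k \<le> Max (depth t ` set (leaves t))"
      by simp
  qed
  then show ?thesis
    unfolding subheight_def using path by (auto intro: Max_ge finite_subset)
qed

lemma B_distinct: "t \<in> B n \<Longrightarrow> distinct (leaves t)"
  by (simp add: B_def)

lemma B_same_leaves: "t \<in> B n \<Longrightarrow> t' \<in> B n \<Longrightarrow> leaves t' = leaves t"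
  by (simp add: B_def)

lemma B_leaves_le: "t \<in> B n \<Longrightarrow> i \<in> set (leaves t) \<Longrightarrow> i \<le> n"
  by (simp add: B_def del: upt_Suc)

lemma B_lm: "t \<in> B n \<Longrightarrow> lm t = 1"
  using leaves_not_Nil[of t] by (simp add: B_def lm_eq_hd_leaves del: upt_Suc)

lemma B_rtrancl_le:
  assumes "t \<in> B n" and "(x, y) \<in> (tedges t)\<^sup>*"
  shows "x \<le> y"
proof -
  have "sorted_wrt (<) (leaves t)"
    using assms(1) by (simp add: B_def del: upt_Suc)
  with assms(2) show ?thesis
    by (induction rule: rtrancl_induct) (auto dest: tedges_increasing)
qed

section \<open>Homomorphisms of G(t) into G\<close>

definition digraph_hom :: "('b \<times> 'b) set \<Rightarrow> ('a \<times> 'a) set \<Rightarrow> ('b \<Rightarrow> 'a) \<Rightarrow> bool" where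
  "digraph_hom T E f \<longleftrightarrow> (\<forall>(p, i) \<in> T. (f p, f i) \<in> E)"

lemma digraph_homD: "digraph_hom T E f \<Longrightarrow> (p, i) \<in> T \<Longrightarrow> (f p, f i) \<in> E"
  unfolding digraph_hom_def by blast

lemma digraph_hom_subset: "digraph_hom T E f \<Longrightarrow> S \<subseteq> T \<Longrightarrow> digraph_hom S E f"
  unfolding digraph_hom_def by blast

lemma geval_Some:
  "geval E (\<lambda>i. Some (f i)) t = (if digraph_hom (tedges t) E f then Some (f (lm t)) else None)"
  by (induction t) (auto simp: digraph_hom_def)

definition hom_equivalent ::
    "'a set \<Rightarrow> ('a \<times> 'a) set \<Rightarrow> ('b \<times> 'b) set \<Rightarrow> ('b \<times> 'b) set \<Rightarrow> bool" where
  "hom_equivalent V E T T' \<longleftrightarrow>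
     (\<forall>f. range f \<subseteq> V \<longrightarrow> (digraph_hom T E f \<longleftrightarrow> digraph_hom T' E f))"

lemma hom_equivalent_sym: "hom_equivalent V E T T' \<Longrightarrow> hom_equivalent V E T' T"
  unfolding hom_equivalent_def by blast

lemma satisfies_sym: "satisfies V E t t' \<Longrightarrow> satisfies V E t' t"
  unfolding satisfies_def by metis

lemma satisfies_hom_equivalent:
  assumes "satisfies V E t t'" and "lm t = lm t'"
  shows "hom_equivalent V E (tedges t) (tedges t')"
  unfolding hom_equivalent_def
proof (intro allI impI)
  fix f :: "nat \<Rightarrow> 'a"
  assume "range f \<subseteq> V"
  then have "\<forall>i. Some (f i) \<in> gcarrier V"
    by (auto simp: gcarrier_def)
  then have "geval E (\<lambda>i. Some (f i)) t = geval E (\<lambda>i. Some (f i)) t'"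
    by (rule assms(1)[unfolded satisfies_def, THEN spec, THEN mp])
  then show "digraph_hom (tedges t) E f \<longleftrightarrow> digraph_hom (tedges t') E f"
    using assms(2) by (auto simp: geval_Some split: if_splits)
qed

lemma depth_walk_hom:
  assumes "distinct (leaves t)" and "\<And>k. (\<omega> k, \<omega> (Suc k)) \<in> E"
  shows "digraph_hom (tedges t) E (\<omega> \<circ> depth t)"
  using assms by (auto simp: digraph_hom_def depth_tedges)

definition subtree_edges :: "bterm \<Rightarrow> nat \<Rightarrow> (nat \<times> nat) set" where
  "subtree_edges t x = {(p, i) \<in> tedges t. (x, p) \<in> (tedges t)\<^sup>*}"

lemma walk_subtree_hom:
  assumes dist: "distinct (leaves t)" and x: "x \<in> set (leaves t)" and height: "subheight t x \<le> l"
    and v: "\<And>k. k < l \<Longrightarrow> (v k, v (Suc k)) \<in> E"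
  shows "digraph_hom (subtree_edges t x) E (\<lambda>i. v (min (depth t i - depth t x) l))"
  unfolding digraph_hom_def subtree_edges_def
proof clarify
  fix p i
  assume pi: "(p, i) \<in> tedges t" and "(x, p) \<in> (tedges t)\<^sup>*"
  then obtain k where xp: "(x, p) \<in> tedges t ^^ k"
    by (auto simp: rtrancl_power)
  then have xi: "(x, i) \<in> tedges t ^^ Suc k"
    using pi by (rule relpow_Suc_I)
  then have "Suc k \<le> l"
    using subheight_ge[OF dist x] height by fastforce
  moreover have "depth t p = depth t x + k" "depth t i = depth t x + Suc k"
    using depth_relpow[OF dist x xp] depth_relpow[OF dist x xi] by simp_all
  ultimately show "(v (min (depth t p - depth t x) l), v (min (depth t i - depth t x) l)) \<in> E"
    using v by simp
qed

definition graft :: "bterm \<Rightarrow> nat \<Rightarrow> (nat \<Rightarrow> 'a) \<Rightarrow> (nat \<Rightarrow> 'a) \<Rightarrow> nat \<Rightarrow> 'a" where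
  "graft t x \<phi> g i = (if (x, i) \<in> (tedges t)\<^sup>* then \<phi> i else g i)"

lemma graft_hom:
  assumes dist: "distinct (leaves t)" and px: "(px, x) \<in> tedges t"
    and g: "digraph_hom (tedges t) E g" and \<phi>: "digraph_hom (subtree_edges t x) E \<phi>"
    and link: "(g px, \<phi> x) \<in> E"
  shows "digraph_hom (tedges t) E (graft t x \<phi> g)"
  unfolding digraph_hom_def
proof clarify
  fix p i
  assume pi: "(p, i) \<in> tedges t"
  have px_outside: "(x, px) \<notin> (tedges t)\<^sup>*"
    using depth_le_descendant[OF dist] depth_tedges[OF dist px] tedges_in_leaves[OF px]
    by fastforce
  consider "i = x" | "i \<noteq> x" "(x, i) \<in> (tedges t)\<^sup>*" | "(x, i) \<notin> (tedges t)\<^sup>*"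
    by blast
  then show "(graft t x \<phi> g p, graft t x \<phi> g i) \<in> E"
  proof cases
    case 1
    then have "p = px"
      using tedges_unique_parent[OF dist pi] px by simp
    then show ?thesis
      using 1 px_outside link by (simp add: graft_def)
  next
    case 2
    then have "(x, p) \<in> (tedges t)\<^sup>*"
      using pi tedges_unique_parent[OF dist] by (metis rtranclE)
    then show ?thesis
      using 2 pi \<phi> by (auto simp: graft_def subtree_edges_def digraph_hom_def)
  next
    case 3
    then have "(x, p) \<notin> (tedges t)\<^sup>*"
      using pi by (meson rtrancl_into_rtrancl)
    then show ?thesis
      using 3 pi g by (simp add: graft_def digraph_homD)
  qed
qed

lemma replace_top_layers_hom:
  assumes dist: "distinct (leaves t)" and f: "digraph_hom (tedges t) E f"
    and \<tau>: "\<And>k. k < L \<Longrightarrow> (\<tau> k, \<tau> (Suc k)) \<in> E"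
    and link: "\<And>i. i \<in> set (leaves t) \<Longrightarrow> depth t i = Suc L \<Longrightarrow> (\<tau> L, f i) \<in> E"
  shows "digraph_hom (tedges t) E (\<lambda>i. if depth t i \<le> L then \<tau> (depth t i) else f i)"
  unfolding digraph_hom_def
proof clarify
  fix p i
  assume pi: "(p, i) \<in> tedges t"
  then have depth_i: "depth t i = Suc (depth t p)"
    by (rule depth_tedges[OF dist])
  consider "depth t i \<le> L" | "depth t i = Suc L" | "Suc L < depth t i"
    by linarith
  then show "((if depth t p \<le> L then \<tau> (depth t p) else f p),
              (if depth t i \<le> L then \<tau> (depth t i) else f i)) \<in> E"
  proof cases
    case 1
    then show ?thesis
      using depth_i \<tau> by simp
  next
    case 2
    then show ?thesis
      using depth_i link tedges_in_leaves[OF pi] by simp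
  next
    case 3
    then show ?thesis
      using depth_i digraph_homD[OF f pi] by simp
  qed
qed

section \<open>Walks in G\<close>

lemma walk_in_vertices:
  assumes "E \<subseteq> V \<times> V" and "walk V E v l" and "i \<le> l"
  shows "v i \<in> V"
proof (cases i)
  case (Suc j)
  then have "(v j, v i) \<in> E"
    using assms(2,3) unfolding walk_def by simp
  then show ?thesis
    using assms(1) by blast
qed (use assms(2) in \<open>simp add: walk_def\<close>)

lemma walk_prefix: "walk V E v m \<Longrightarrow> l \<le> m \<Longrightarrow> walk V E v l"
  unfolding walk_def by simp

lemma trancl_cycle_infinite_walk:
  assumes "(c, c) \<in> R\<^sup>+"
  obtains z where "z 0 = c" and "\<And>k. (z k, z (Suc k)) \<in> R"
proof -
  have "\<exists>y'. (y, y') \<in> R \<and> (y', c) \<in> R\<^sup>*" if "(y, c) \<in> R\<^sup>*" for y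
  proof -
    have "(y, c) \<in> R\<^sup>+"
      using that assms by (metis rtranclD)
    then show ?thesis
      by (meson tranclD)
  qed
  then obtain nxt where nxt: "\<And>y. (y, c) \<in> R\<^sup>* \<Longrightarrow> (y, nxt y) \<in> R \<and> (nxt y, c) \<in> R\<^sup>*"
    by metis
  have "((nxt ^^ k) c, c) \<in> R\<^sup>*" for k
    by (induction k) (auto dest: nxt)
  then show ?thesis
    using that[of "\<lambda>k. (nxt ^^ k) c"] nxt by simp
qed

lemma trancl_cycle_walk_ending_at:
  assumes "(w, w) \<in> R\<^sup>+"
  obtains \<beta> where "\<beta> l = w" and "\<And>k. k < l \<Longrightarrow> (\<beta> k, \<beta> (Suc k)) \<in> R"
proof -
  have "(w, w) \<in> (R\<inverse>)\<^sup>+"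
    using assms by (simp add: trancl_converse)
  then obtain y where "y 0 = w" and y: "\<And>k. (y k, y (Suc k)) \<in> R\<inverse>"
    by (rule trancl_cycle_infinite_walk) auto
  moreover have "(y (l - k), y (l - Suc k)) \<in> R" if "k < l" for k
    using y[of "l - Suc k"] that by (simp add: Suc_diff_Suc)
  ultimately show ?thesis
    using that[of "\<lambda>k. y (l - k)"] by simp
qed

definition walk_append :: "nat \<Rightarrow> (nat \<Rightarrow> 'a) \<Rightarrow> (nat \<Rightarrow> 'a) \<Rightarrow> nat \<Rightarrow> 'a" where
  "walk_append l \<sigma> z k = (if k \<le> l then \<sigma> k else z (k - Suc l))"

lemma walk_append_edge:
  assumes "\<And>k. k < l \<Longrightarrow> (\<sigma> k, \<sigma> (Suc k)) \<in> R" and "(\<sigma> l, z 0) \<in> R"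
    and "\<And>k. (z k, z (Suc k)) \<in> R"
  shows "(walk_append l \<sigma> z k, walk_append l \<sigma> z (Suc k)) \<in> R"
proof (cases k l rule: linorder_cases)
  case greater
  then have "Suc k - Suc l = Suc (k - Suc l)"
    by simp
  then show ?thesis
    using greater assms(3)[of "k - Suc l"] by (simp add: walk_append_def)
qed (use assms in \<open>simp_all add: walk_append_def\<close>)

lemma entryway_infinite_walks:
  assumes ent: "entryway V E u (Suc l) K" and w: "w \<in> K" "(w, u (Suc l)) \<in> E"
  obtains \<omega>a \<omega>b where "\<And>k. (\<omega>a k, \<omega>a (Suc k)) \<in> E" and "\<And>k. (\<omega>b k, \<omega>b (Suc k)) \<in> E"
    and "\<omega>a l = u l" and "\<omega>b l = w" and "\<And>k. l < k \<Longrightarrow> \<omega>a k = \<omega>b k"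
proof -
  have u: "\<And>k. k < Suc l \<Longrightarrow> (u k, u (Suc k)) \<in> E" and "u (Suc l) \<in> K"
    and "is_scc V E K"
    using ent by (auto simp: entryway_def walk_def nontrivial_scc_def)
  then have "(u (Suc l), w) \<in> E\<^sup>*"
    using w(1) unfolding is_scc_def scc_def by (blast intro: rtrancl_trans)
  then have cycle_u: "(u (Suc l), u (Suc l)) \<in> E\<^sup>+" and cycle_w: "(w, w) \<in> E\<^sup>+"
    using w(2) by (auto intro: rtrancl_into_trancl1 rtrancl_into_trancl2)
  obtain z where z0: "z 0 = u (Suc l)" and z: "\<And>k. (z k, z (Suc k)) \<in> E"
    by (rule trancl_cycle_infinite_walk[OF cycle_u]) auto
  obtain \<beta> where \<beta>l: "\<beta> l = w" and \<beta>: "\<And>k. k < l \<Longrightarrow> (\<beta> k, \<beta> (Suc k)) \<in> E"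
    by (rule trancl_cycle_walk_ending_at[OF cycle_w]) auto
  show ?thesis
  proof (rule that[of "walk_append l u z" "walk_append l \<beta> z"])
    show "(walk_append l u z k, walk_append l u z (Suc k)) \<in> E" for k
      by (rule walk_append_edge) (use u z0 z in simp_all)
    show "(walk_append l \<beta> z k, walk_append l \<beta> z (Suc k)) \<in> E" for k
      by (rule walk_append_edge) (use \<beta> \<beta>l z0 z w(2) in simp_all)
  qed (simp_all add: walk_append_def \<beta>l)
qed

section \<open>Moving an edge from one tree to the other\<close>

definition depths_agree_upto :: "nat \<Rightarrow> bterm \<Rightarrow> bterm \<Rightarrow> bool" where
  "depths_agree_upto m t t' \<longleftrightarrow>
     (\<forall>x\<in>set (leaves t). (depth t x \<le> m \<or> depth t' x \<le> m) \<longrightarrow> depth t x = depth t' x)"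

lemma depths_agree_upto_sym:
  "leaves t' = leaves t \<Longrightarrow> depths_agree_upto m t t' \<Longrightarrow> depths_agree_upto m t' t"
  unfolding depths_agree_upto_def by metis

lemma depths_agree_uptoD:
  "depths_agree_upto m t t' \<Longrightarrow> x \<in> set (leaves t) \<Longrightarrow> depth t x \<le> m \<or> depth t' x \<le> m \<Longrightarrow>
    depth t x = depth t' x"
  unfolding depths_agree_upto_def by blast

lemma parent_across_level:
  assumes dist': "distinct (leaves t')" and same: "leaves t' = leaves t"
    and agree: "depths_agree_upto L t t'"
    and i: "i \<in> set (leaves t')" and depth_i: "depth t' i = Suc L"
  obtains p where "(p, i) \<in> tedges t'" and "depth t p = L" and "L < depth t i"
proof -
  obtain p where p: "(p, i) \<in> tedges t'" and depth'_p: "depth t' p = L"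
    using parent_exists[OF dist' i depth_i] by blast
  have "p \<in> set (leaves t)"
    using tedges_in_leaves[OF p] same by simp
  then have "depth t p = L"
    using depths_agree_uptoD[OF agree, of p] depth'_p by simp
  moreover have "L < depth t i"
  proof (rule ccontr)
    assume "\<not> L < depth t i"
    moreover have "i \<in> set (leaves t)"
      using i same by simp
    ultimately have "depth t i = depth t' i"
      using depths_agree_uptoD[OF agree] by simp
    then show False
      using \<open>\<not> L < depth t i\<close> depth_i by simp
  qed
  ultimately show ?thesis
    using that p by blast
qed

lemma top_layers_relink:
  assumes dist': "distinct (leaves t')" and same: "leaves t' = leaves t"
    and equiv: "hom_equivalent V E (tedges t') (tedges t)" and agree: "depths_agree_upto L t t'"
    and f: "digraph_hom (tedges t') E f" and fV: "range f \<subseteq> V"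
    and \<tau>: "\<And>k. k < L \<Longrightarrow> (\<tau> k, \<tau> (Suc k)) \<in> E" and \<tau>V: "range \<tau> \<subseteq> V"
    and link: "\<And>i. i \<in> set (leaves t') \<Longrightarrow> depth t' i = Suc L \<Longrightarrow> (\<tau> L, f i) \<in> E"
    and px: "(px, x) \<in> tedges t" and depth_px: "depth t px = L"
  shows "(\<tau> L, f x) \<in> E"
proof -
  define f2 where "f2 = (\<lambda>i. if depth t' i \<le> L then \<tau> (depth t' i) else f i)"
  have "digraph_hom (tedges t') E f2"
    unfolding f2_def using replace_top_layers_hom[OF dist' f] \<tau> link by blast
  moreover have "range f2 \<subseteq> V"
    using fV \<tau>V by (auto simp: f2_def)
  ultimately have "digraph_hom (tedges t) E f2"
    using equiv unfolding hom_equivalent_def by blast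
  then have "(f2 px, f2 x) \<in> E"
    using px by (rule digraph_homD)
  moreover have "depth t' px = L"
    using depths_agree_uptoD[OF agree, of px] tedges_in_leaves[OF px] depth_px by simp
  moreover have "\<not> depth t' x \<le> L"
  proof
    assume "depth t' x \<le> L"
    then have "depth t x = depth t' x"
      using depths_agree_uptoD[OF agree] tedges_in_leaves[OF px] by simp
    moreover have "depth t x = Suc L"
      using depth_tedges[OF _ px] dist' same depth_px by simp
    ultimately show False
      using \<open>depth t' x \<le> L\<close> by simp
  qed
  ultimately show ?thesis
    by (simp add: f2_def)
qed

(* The induction runs along the leaf order: the recursive call is for a leaf strictly below x
   in G(t), which is a larger leaf. *)
lemma edge_transfer:
  fixes \<omega>a \<omega>b \<phi> :: "nat \<Rightarrow> 'a"
  assumes EV: "E \<subseteq> V \<times> V"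
    and \<omega>a: "\<And>k. (\<omega>a k, \<omega>a (Suc k)) \<in> E" and \<omega>b: "\<And>k. (\<omega>b k, \<omega>b (Suc k)) \<in> E"
    and tails: "\<And>k. L < k \<Longrightarrow> \<omega>a k = \<omega>b k"
  shows "t \<in> B n \<Longrightarrow> t' \<in> B n \<Longrightarrow> hom_equivalent V E (tedges t) (tedges t') \<Longrightarrow>
    depths_agree_upto L t t' \<Longrightarrow> x \<in> set (leaves t) \<Longrightarrow> depth t x = Suc L \<Longrightarrow>
    depth t' x \<noteq> Suc L \<Longrightarrow> range \<phi> \<subseteq> V \<Longrightarrow> digraph_hom (subtree_edges t x) E \<phi> \<Longrightarrow>
    (\<omega>a L, \<phi> x) \<in> E \<Longrightarrow> (\<omega>b L, \<phi> x) \<in> E"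
proof (induction "n - x" arbitrary: t t' x \<phi> rule: less_induct)
  case less
  note t = less.prems(1) and t' = less.prems(2) and equiv = less.prems(3)
    and agree = less.prems(4) and x = less.prems(5) and depth_x = less.prems(6)
    and depth'_x = less.prems(7) and \<phi>V = less.prems(8) and \<phi> = less.prems(9)
    and link = less.prems(10)
  have dist: "distinct (leaves t)" and dist': "distinct (leaves t')"
    and same: "leaves t' = leaves t"
    using B_distinct[OF t] B_distinct[OF t'] B_same_leaves[OF t t'] .
  have \<omega>V: "range \<omega>a \<subseteq> V" "range \<omega>b \<subseteq> V"
    using EV \<omega>a \<omega>b by blast+
  have hom_iff: "digraph_hom (tedges t) E f \<longleftrightarrow> digraph_hom (tedges t') E f"
    if "range f \<subseteq> V" for f
    using equiv that unfolding hom_equivalent_def by blast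
  obtain px where px: "(px, x) \<in> tedges t" "depth t px = L"
    using parent_exists[OF dist x depth_x] by blast
  define f where "f = graft t x \<phi> (\<omega>a \<circ> depth t)"
  have fV: "range f \<subseteq> V"
    using \<phi>V \<omega>V by (auto simp: f_def graft_def)
  have "digraph_hom (tedges t) E f"
    unfolding f_def
    using graft_hom[OF dist px(1) depth_walk_hom[where \<omega> = \<omega>a, OF dist \<omega>a] \<phi>] link px(2)
    by simp
  then have f': "digraph_hom (tedges t') E f"
    using hom_iff fV by blast
  have g': "digraph_hom (tedges t') E (\<omega>b \<circ> depth t)"
    using hom_iff[of "\<omega>b \<circ> depth t"] depth_walk_hom[where \<omega> = \<omega>b, OF dist \<omega>b] \<omega>V
    by fastforce
  have cross: "(\<omega>b L, f i) \<in> E" if i: "i \<in> set (leaves t')" and depth'_i: "depth t' i = Suc L"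
    for i
  proof -
    obtain p where p: "(p, i) \<in> tedges t'" and depth_p: "depth t p = L"
      and depth_i: "L < depth t i"
      using parent_across_level[OF dist' same agree i depth'_i] .
    have i_leaf: "i \<in> set (leaves t)"
      using i same by simp
    show ?thesis
    proof (cases "(x, i) \<in> (tedges t)\<^sup>*")
      case True
      have "i \<noteq> x"
        using depth'_x depth'_i by auto
      have "(x, p) \<notin> (tedges t)\<^sup>*"
        using depth_le_descendant[OF dist x] depth_x depth_p by fastforce
      then have "f p = \<omega>a L"
        using depth_p by (simp add: f_def graft_def)
      then have link_i: "(\<omega>a L, f i) \<in> E"
        using digraph_homD[OF f' p] by simp
      have "n - i < n - x"
        using B_rtrancl_le[OF t True] \<open>i \<noteq> x\<close> B_leaves_le[OF t i_leaf] by simp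
      moreover have "depth t i \<noteq> Suc L"
        using depth_less_descendant[OF dist x True \<open>i \<noteq> x\<close>] depth_x by simp
      moreover have "digraph_hom (subtree_edges t' i) E f"
        by (rule digraph_hom_subset[OF f']) (auto simp: subtree_edges_def)
      ultimately show ?thesis
        using less.hyps[OF _ t' t hom_equivalent_sym[OF equiv] depths_agree_upto_sym[OF same agree]
            i depth'_i _ fV _ link_i]
        by simp
    next
      case False
      then have "f i = \<omega>b (depth t i)"
        using tails depth_i by (simp add: f_def graft_def)
      then show ?thesis
        using digraph_homD[OF g' p] depth_p by simp
    qed
  qed
  have "(\<omega>b L, f x) \<in> E"
    using top_layers_relink[OF dist' same hom_equivalent_sym[OF equiv] agree f' fV \<omega>b \<omega>V(2)
        cross px] .
  then show ?case
    by (simp add: f_def graft_def)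
qed

lemma depths_agree_upto_0: "t \<in> B n \<Longrightarrow> t' \<in> B n \<Longrightarrow> depths_agree_upto 0 t t'"
  unfolding depths_agree_upto_def
  by (metis B_distinct B_lm B_same_leaves depth_eq_0_imp_lm depth_lm le_0_eq)

lemma Lt_maximal:
  assumes t: "t \<in> B n" and t': "t' \<in> B n" and "t \<noteq> t'"
  shows "depths_agree_upto (Lt t t') t t'" and "\<not> depths_agree_upto (Suc (Lt t t')) t t'"
proof -
  obtain x where x: "x \<in> set (leaves t)" "depth t x \<noteq> depth t' x"
    using bterm_eq_if_depth_eq B_distinct[OF t] B_same_leaves[OF t t'] \<open>t \<noteq> t'\<close> by blast
  have bounded: "m \<le> depth t x" if "depths_agree_upto m t t'" for m
    using that x unfolding depths_agree_upto_def by force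
  let ?P = "\<lambda>m. depths_agree_upto m t t'"
  have Lt_eq: "Lt t t' = Greatest ?P"
    unfolding Lt_def depths_agree_upto_def ..
  show "depths_agree_upto (Lt t t') t t'"
    unfolding Lt_eq by (rule GreatestI_nat[where P = ?P, OF depths_agree_upto_0[OF t t'] bounded])
  show "\<not> depths_agree_upto (Suc (Lt t t')) t t'"
    unfolding Lt_eq using Greatest_le_nat[where P = ?P, OF _ bounded] by fastforce
qed

lemma lambdat_attained:
  assumes t: "t \<in> B n" and t': "t' \<in> B n" and "t \<noteq> t'"
  obtains x where "x \<in> Lambda_set t t'"
    and "lambdat t t' = max (subheight t x) (subheight t' x)"
proof -
  obtain y where "y \<in> set (leaves t)" "depth t y \<le> Suc (Lt t t') \<or> depth t' y \<le> Suc (Lt t t')"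
    "depth t y \<noteq> depth t' y"
    using Lt_maximal(2)[OF assms] unfolding depths_agree_upto_def by blast
  moreover have "\<not> (depth t y \<le> Lt t t' \<or> depth t' y \<le> Lt t t')"
    using Lt_maximal(1)[OF assms] calculation unfolding depths_agree_upto_def by blast
  ultimately have "y \<in> Lambda_set t t'"
    unfolding Lambda_set_def by auto
  moreover have "finite (Lambda_set t t')"
    unfolding Lambda_set_def by simp
  ultimately show ?thesis
    using that Min_in[of "(\<lambda>x. max (subheight t x) (subheight t' x)) ` Lambda_set t t'"]
    unfolding lambdat_def by blast
qed

lemma walk_edge_transfer:
  assumes EV: "E \<subseteq> V \<times> V"
    and \<omega>a: "\<And>k. (\<omega>a k, \<omega>a (Suc k)) \<in> E" and \<omega>b: "\<And>k. (\<omega>b k, \<omega>b (Suc k)) \<in> E"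
    and tails: "\<And>k. L < k \<Longrightarrow> \<omega>a k = \<omega>b k"
    and s: "s \<in> B n" and s': "s' \<in> B n" and sat: "satisfies V E s s'"
    and agree: "depths_agree_upto L s s'" and x: "x \<in> set (leaves s)"
    and depth_x: "depth s x = Suc L" and depth'_x: "depth s' x \<noteq> Suc L"
    and height: "subheight s x \<le> l" and v: "walk V E v l" and link: "(\<omega>a L, v 0) \<in> E"
  shows "(\<omega>b L, v 0) \<in> E"
proof -
  let ?\<phi> = "\<lambda>i. v (min (depth s i - depth s x) l)"
  have \<phi>V: "range ?\<phi> \<subseteq> V"
    using walk_in_vertices[OF EV v] by auto
  have \<phi>: "digraph_hom (subtree_edges s x) E ?\<phi>"
    using walk_subtree_hom[OF B_distinct[OF s] x height] v unfolding walk_def by blast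
  have equiv: "hom_equivalent V E (tedges s) (tedges s')"
    using satisfies_hom_equivalent[OF sat] B_lm[OF s] B_lm[OF s'] by simp
  show ?thesis
    using edge_transfer[where \<omega>a = \<omega>a and \<omega>b = \<omega>b,
        OF EV \<omega>a \<omega>b tails s s' equiv agree x depth_x depth'_x \<phi>V \<phi>] link
    by simp
qed

lemma Lambda_edge_transfer:
  assumes t: "t \<in> B n" and t': "t' \<in> B n" and "t \<noteq> t'"
    and EV: "E \<subseteq> V \<times> V" and sat: "satisfies V E t t'"
    and \<omega>a: "\<And>k. (\<omega>a k, \<omega>a (Suc k)) \<in> E" and \<omega>b: "\<And>k. (\<omega>b k, \<omega>b (Suc k)) \<in> E"
    and tails: "\<And>k. Lt t t' < k \<Longrightarrow> \<omega>a k = \<omega>b k"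
    and v: "walk V E v (lambdat t t')" and link: "(\<omega>a (Lt t t'), v 0) \<in> E"
  shows "(\<omega>b (Lt t t'), v 0) \<in> E"
proof -
  obtain x where x: "x \<in> Lambda_set t t'"
    and lam: "lambdat t t' = max (subheight t x) (subheight t' x)"
    using lambdat_attained[OF t t' \<open>t \<noteq> t'\<close>] .
  have agree: "depths_agree_upto (Lt t t') t t'"
    using Lt_maximal(1)[OF t t' \<open>t \<noteq> t'\<close>] .
  note transfer = walk_edge_transfer[where \<omega>a = \<omega>a and \<omega>b = \<omega>b and L = "Lt t t'"]
  from x have x_t: "x \<in> set (leaves t)" and "depth t x \<noteq> depth t' x"
    and "depth t x = Suc (Lt t t') \<or> depth t' x = Suc (Lt t t')"
    unfolding Lambda_set_def by auto
  then consider "depth t x = Suc (Lt t t')" "depth t' x \<noteq> Suc (Lt t t')"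
    | "depth t' x = Suc (Lt t t')" "depth t x \<noteq> Suc (Lt t t')"
    by fastforce
  then show ?thesis
  proof cases
    case 1
    show ?thesis
      by (rule transfer) (use EV \<omega>a \<omega>b tails t t' sat agree x_t 1 lam v link in auto)
  next
    case 2
    have "x \<in> set (leaves t')"
      using x_t B_same_leaves[OF t t'] by simp
    show ?thesis
      by (rule transfer)
        (use EV \<omega>a \<omega>b tails t' t satisfies_sym[OF sat] 2 \<open>x \<in> set (leaves t')\<close>
          depths_agree_upto_sym[OF B_same_leaves[OF t t'] agree] lam v link in auto)
  qed
qed

lemma entryway_edge_iff:
  assumes "t \<in> B n" and "t' \<in> B n" and "t \<noteq> t'" and "E \<subseteq> V \<times> V" and "satisfies V E t t'"
    and ent: "entryway V E u (Suc (Lt t t')) K" and w: "w \<in> K" "(w, u (Suc (Lt t t'))) \<in> E"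
    and v: "walk V E v (lambdat t t')"
  shows "(w, v 0) \<in> E \<longleftrightarrow> (u (Lt t t'), v 0) \<in> E"
proof -
  obtain \<omega>a \<omega>b where \<omega>a: "\<And>k. (\<omega>a k, \<omega>a (Suc k)) \<in> E" and \<omega>b: "\<And>k. (\<omega>b k, \<omega>b (Suc k)) \<in> E"
    and "\<omega>a (Lt t t') = u (Lt t t')" and "\<omega>b (Lt t t') = w"
    and tails: "\<And>k. Lt t t' < k \<Longrightarrow> \<omega>a k = \<omega>b k"
    using entryway_infinite_walks[OF ent w] by blast
  then show ?thesis
    using Lambda_edge_transfer[where \<omega>a = \<omega>a and \<omega>b = \<omega>b, OF assms(1-5) \<omega>a \<omega>b tails v]
      Lambda_edge_transfer[where \<omega>a = \<omega>b and \<omega>b = \<omega>a, OF assms(1-5) \<omega>b \<omega>a tails[symmetric] v]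
    by auto
qed

lemma lambdaG_less:
  assumes EG: "EG V E = ereal (real (Suc L))"
    and edge_iff: "\<And>u K w v. entryway V E u (Suc L) K \<Longrightarrow> w \<in> K \<Longrightarrow> (w, u (Suc L)) \<in> E \<Longrightarrow>
      walk V E v l \<Longrightarrow> (w, v 0) \<in> E \<longleftrightarrow> (u L, v 0) \<in> E"
  shows "lambdaG V E < ereal (real l)"
proof -
  have "lambdaG V E \<le> ereal (real l - 1)"
    unfolding lambdaG_def
  proof (rule Sup_least, clarify)
    fix m u l' K w v
    assume "ereal (real l') = EG V E" and "entryway V E u l' K" "w \<in> K" "(w, u l') \<in> E"
      and "walk V E v m" and "((w, v 0) \<in> E) \<noteq> ((u (l' - 1), v 0) \<in> E)"
    moreover have "l' = Suc L"
      using \<open>ereal (real l') = EG V E\<close> EG by simp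
    ultimately have "\<not> l \<le> m"
      using edge_iff walk_prefix by fastforce
    then show "ereal (real m) \<le> ereal (real l - 1)"
      by simp
  qed
  then show ?thesis
    by (simp add: order.strict_trans1)
qed

theorem lemma6p29:
  fixes t t' :: bterm and n :: nat and V :: "'a set" and E :: "('a \<times> 'a) set"
  assumes "t \<in> B n" and "t' \<in> B n" and "t \<noteq> t'"
    and "E \<subseteq> V \<times> V"
    and "satisfies V E t t'"
    and "EG V E = ereal (real (Lt t t' + 1))"
  shows "(\<forall>u K w v. entryway V E u (Lt t t' + 1) K \<and> w \<in> K \<and> (w, u (Lt t t' + 1)) \<in> E
            \<and> walk V E v (lambdat t t')
          \<longrightarrow> ((w, v 0) \<in> E \<longleftrightarrow> (u (Lt t t'), v 0) \<in> E))
       \<and> lambdaG V E < ereal (real (lambdat t t'))"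
proof -
  have "(w, v 0) \<in> E \<longleftrightarrow> (u (Lt t t'), v 0) \<in> E"
    if "entryway V E u (Suc (Lt t t')) K" and "w \<in> K" and "(w, u (Suc (Lt t t'))) \<in> E"
      and "walk V E v (lambdat t t')" for u K w v
    using entryway_edge_iff[OF assms(1-5) that] .
  moreover have "lambdaG V E < ereal (real (lambdat t t'))"
    by (rule lambdaG_less[where L = "Lt t t'" and l = "lambdat t t'"])
      (use assms(6) calculation in simp_all)
  ultimately show ?thesis
    by auto
qed

end
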